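(* Let $X=\{x_1,\ldots,x_n\}\subseteq\mathbb{R}^d$, $\varepsilon\in(0,1)$, let $\Pi\in\mathbb{R}^{m\times d}$ provide $\frac{\varepsilon}{60}$-convex hull distortion for $S_X$, and let $\alpha\colon\mathbb{R}^d\to\mathbb{R}^m$ be the solution map $\alpha(u)=\arg\min_{z\in F_u}\|z\|$. Let $V=\bigcup_{k=1}^nV_k$. Then $\alpha$ is locally Lipschitz at every point of $V\setminus X$ (i.e., for each such $u$ there are a neighborhood $U$ of $u$ and $c>0$ with $\|\alpha(v)-\alpha(w)\|\le c\|v-w\|$ for all $v,w\in U$), and $\mathbb{R}^d\setminus V$ has Lebesgue measure zero. In particular $\alpha$ is locally Lipschitz almost everywhere on $\mathbb{R}^d$.
   Context: Norms are Euclidean. $S_X=\overline{\{(x-y)/\|x-y\|: x\ne y\in X\}}$. A linear $\Pi\colon\mathbb{R}^d\to\mathbb{R}^m$ provides $\eta$-convex hull distortion for $T\subseteq S^{d-1}$ if $|\,\|\Pi x\|-\|x\|\,|<\eta$ for all $x\in\operatorname{conv}(T)$. For $u\in\mathbb{R}^d$, $u_{NN}$ denotes a point of $X$ at minimal distance from $u$ (chosen by some fixed rule when not unique). The Voronoi cell of $x_k$ is $V_k=\{u:\|u-x_k\|<\|u-x_j\|\ \forall j\ne k\}$. For $z\in\mathbb{R}^m$, $u\in\mathbb{R}^d$, $i=1,\ldots,n$: $g_i(z,u)=\langle z,\Pi(x_i-u_{NN})\rangle-\langle u-u_{NN},x_i-u_{NN}\rangle-\frac{\varepsilon}{10}\|u-u_{NN}\|\|x_i-u_{NN}\|$,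 $g_{n+i}(z,u)=\langle u-u_{NN},x_i-u_{NN}\rangle-\langle z,\Pi(x_i-u_{NN})\rangle-\frac{\varepsilon}{10}\|u-u_{NN}\|\|x_i-u_{NN}\|$, and $F_u=\{z\in\mathbb{R}^m: g_i(z,u)\le0,\ i=1,\ldots,2n\}$, a closed convex set which is known to be nonempty for every $u$ under the stated hypothesis on $\Pi$; hence $\alpha(u)$ (the orthogonal projection of $0$ onto $F_u$) is well defined. *)

theory Defs
  imports "HOL-Analysis.Analysis"
begin

definition diff_dirs :: "'a::real_normed_vector set \<Rightarrow> 'a set" where
  "diff_dirs X = closure {(x - y) /\<^sub>R norm (x - y) | x y. x \<in> X \<and> y \<in> X \<and> x \<noteq> y}"

definition conv_hull_distortion ::
  "('a::real_normed_vector \<Rightarrow> 'b::real_normed_vector) \<Rightarrow> real \<Rightarrow> 'a set \<Rightarrow> bool" where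
  "conv_hull_distortion P eta T \<longleftrightarrow>
     (\<forall>x \<in> convex hull T. \<bar>norm (P x) - norm x\<bar> < eta)"

definition is_NN_rule :: "'a::metric_space set \<Rightarrow> ('a \<Rightarrow> 'a) \<Rightarrow> bool" where
  "is_NN_rule X NN \<longleftrightarrow> (\<forall>u. NN u \<in> X \<and> (\<forall>y \<in> X. dist u (NN u) \<le> dist u y))"

definition voronoi_cell :: "'a::metric_space set \<Rightarrow> 'a \<Rightarrow> 'a set" where
  "voronoi_cell X x = {u. \<forall>y \<in> X. y \<noteq> x \<longrightarrow> dist u x < dist u y}"

text \<open>The feasible set F_u: all z with g_i(z,u) <= 0 and g_{n+i}(z,u) <= 0 for every x_i in X.\<close>
definition feas_set ::
  "('a::real_inner \<Rightarrow> 'b::real_inner) \<Rightarrow> real \<Rightarrow> 'a set \<Rightarrow> ('a \<Rightarrow> 'a) \<Rightarrow> 'a \<Rightarrow> 'b set" where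
  "feas_set P eps X NN u =
     {z. \<forall>x \<in> X.
        inner z (P (x - NN u)) - inner (u - NN u) (x - NN u)
          - (eps / 10) * norm (u - NN u) * norm (x - NN u) \<le> 0
      \<and> inner (u - NN u) (x - NN u) - inner z (P (x - NN u))
          - (eps / 10) * norm (u - NN u) * norm (x - NN u) \<le> 0}"

definition sol_map ::
  "('a::real_inner \<Rightarrow> 'b::euclidean_space) \<Rightarrow> real \<Rightarrow> 'a set \<Rightarrow> ('a \<Rightarrow> 'a) \<Rightarrow> 'a \<Rightarrow> 'b" where
  "sol_map P eps X NN u = closest_point (feas_set P eps X NN u) 0"

definition locally_lipschitz_at :: "('a::metric_space \<Rightarrow> 'b::metric_space) \<Rightarrow> 'a \<Rightarrow> bool" where
  "locally_lipschitz_at f u \<longleftrightarrow>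
     (\<exists>U c. open U \<and> u \<in> U \<and> c > 0 \<and> (\<forall>v \<in> U. \<forall>w \<in> U. dist (f v) (f w) \<le> c * dist v w))"

end

theory Submission
  imports Defs
begin

text \<open>
  On the Voronoi cell of \<open>x\<^sub>k\<close> the nearest neighbour is constant, so \<open>F\<^sub>u\<close> is a polyhedron
  \<open>{z. \<forall>i. a\<^sub>i \<bullet> z \<le> b\<^sub>i(u)}\<close> with fixed normals and right-hand sides that are Lipschitz in \<open>u\<close>;
  the convex hull distortion of \<open>\<Pi>\<close> guarantees that it is nonempty. The minimal-norm point
  of a nonempty polyhedron is a Lipschitz function of the right-hand side: along a segment of
  right-hand sides, every parameter lies in one of finitely many closed sets on which a fixed
  set \<open>J\<close> of constraints is active and certifies optimality, and on such a set the minimiser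
  moves in \<open>span {a\<^sub>j. j \<in> J}\<close>, where \<open>\<Sum>\<^sub>j\<in>\<^sub>J \<bar>a\<^sub>j \<bullet> w\<bar>\<close> is a norm. Finally, points outside all
  Voronoi cells lie on finitely many bisecting hyperplanes, a null set.
\<close>

section \<open>Lipschitz bounds along an interval\<close>

lemma dist_le_of_locally_lipschitz_interval:
  fixes \<phi> :: "real \<Rightarrow> 'a::metric_space"
  assumes loc: "\<And>t. t \<in> {0..1} \<Longrightarrow>
      \<exists>d>0. \<forall>s\<in>{0..1}. \<bar>s - t\<bar> < d \<longrightarrow> dist (\<phi> s) (\<phi> t) \<le> K * \<bar>s - t\<bar>"
  shows "dist (\<phi> 0) (\<phi> 1) \<le> K"
proof -
  define S where "S = {t\<in>{0..1}. dist (\<phi> 0) (\<phi> t) \<le> K * t}"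
  have S0: "0 \<in> S" by (simp add: S_def)
  then have Sne: "S \<noteq> {}" by blast
  have bdd: "bdd_above S" by (auto simp: S_def bdd_above_def)
  define \<tau> where "\<tau> = Sup S"
  have t0: "0 \<le> \<tau>" unfolding \<tau>_def using S0 bdd by (rule cSup_upper)
  have t1: "\<tau> \<le> 1" unfolding \<tau>_def by (rule cSup_least[OF Sne]) (simp add: S_def)
  obtain d where d: "d > 0" "\<And>s. s \<in> {0..1} \<Longrightarrow> \<bar>s - \<tau>\<bar> < d \<Longrightarrow> dist (\<phi> s) (\<phi> \<tau>) \<le> K * \<bar>s - \<tau>\<bar>"
    using loc[of \<tau>] t0 t1 by auto
  obtain s where s: "s \<in> S" "\<tau> - d < s"
    using less_cSup_iff[of S "\<tau> - d"] S0 bdd d(1) by (auto simp: \<tau>_def)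
  have "s \<le> \<tau>" unfolding \<tau>_def using s(1) bdd by (rule cSup_upper)
  have "dist (\<phi> 0) (\<phi> \<tau>) \<le> dist (\<phi> 0) (\<phi> s) + dist (\<phi> s) (\<phi> \<tau>)" by (rule dist_triangle)
  also have "\<dots> \<le> K * s + K * \<bar>s - \<tau>\<bar>"
    using s \<open>s \<le> \<tau>\<close> d(2)[of s] by (intro add_mono) (auto simp: S_def)
  also have "\<dots> = K * \<tau>" using \<open>s \<le> \<tau>\<close> by (simp add: algebra_simps)
  finally have \<tau>S: "dist (\<phi> 0) (\<phi> \<tau>) \<le> K * \<tau>" .
  have "\<tau> = 1"
  proof (rule ccontr)
    assume "\<tau> \<noteq> 1"
    define s' where "s' = min 1 (\<tau> + d / 2)"
    have s': "s' \<in> {0..1}" "\<bar>s' - \<tau>\<bar> < d" "\<tau> < s'"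
      using t0 t1 \<open>\<tau> \<noteq> 1\<close> d(1) by (auto simp: s'_def)
    have "dist (\<phi> 0) (\<phi> s') \<le> dist (\<phi> 0) (\<phi> \<tau>) + dist (\<phi> \<tau>) (\<phi> s')" by (rule dist_triangle)
    also have "\<dots> \<le> K * \<tau> + K * \<bar>s' - \<tau>\<bar>" using \<tau>S d(2)[OF s'(1,2)] by (simp add: dist_commute)
    also have "\<dots> = K * s'" using s' by (simp add: algebra_simps)
    finally have "s' \<in> S" using s' by (simp add: S_def)
    then have "s' \<le> \<tau>" unfolding \<tau>_def using bdd by (rule cSup_upper)
    with s' show False by simp
  qed
  with \<tau>S show ?thesis by simp
qed

lemma eventually_in_closed_members:
  assumes "finite \<E>" "\<And>E. E \<in> \<E> \<Longrightarrow> closed E"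
  shows "eventually (\<lambda>s. \<forall>E\<in>\<E>. s \<in> E \<longrightarrow> t \<in> E) (nhds t)"
proof -
  have "eventually (\<lambda>s. s \<in> E \<longrightarrow> t \<in> E) (nhds t)" if "E \<in> \<E>" for E
  proof (cases "t \<in> E")
    case False
    then have "eventually (\<lambda>s. s \<in> - E) (nhds t)"
      using assms(2)[OF that] by (intro eventually_nhds_in_open) auto
    then show ?thesis by (rule eventually_mono) auto
  qed simp
  with assms(1) show ?thesis by (simp add: eventually_ball_finite)
qed

lemma dist_le_of_closed_cover_lipschitz:
  fixes \<phi> :: "real \<Rightarrow> 'a::metric_space"
  assumes fin: "finite \<E>" and cl: "\<And>E. E \<in> \<E> \<Longrightarrow> closed E"
    and cov: "{0..1} \<subseteq> \<Union>\<E>"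
    and lip: "\<And>E s t. E \<in> \<E> \<Longrightarrow> s \<in> E \<Longrightarrow> t \<in> E \<Longrightarrow> s \<in> {0..1} \<Longrightarrow> t \<in> {0..1}
                 \<Longrightarrow> dist (\<phi> s) (\<phi> t) \<le> K * \<bar>s - t\<bar>"
  shows "dist (\<phi> 0) (\<phi> 1) \<le> K"
proof (rule dist_le_of_locally_lipschitz_interval)
  fix t :: real assume t: "t \<in> {0..1}"
  obtain d where d: "d > 0" "\<And>s. dist s t < d \<Longrightarrow> \<forall>E\<in>\<E>. s \<in> E \<longrightarrow> t \<in> E"
    using eventually_in_closed_members[OF fin cl, of t] unfolding eventually_nhds_metric by blast
  show "\<exists>d>0. \<forall>s\<in>{0..1}. \<bar>s - t\<bar> < d \<longrightarrow> dist (\<phi> s) (\<phi> t) \<le> K * \<bar>s - t\<bar>"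
  proof (intro exI[of _ d] conjI ballI impI)
    fix s assume s: "s \<in> {0..1}" "\<bar>s - t\<bar> < d"
    then obtain E where E: "E \<in> \<E>" "s \<in> E" using cov by blast
    with d(2)[of s] s have "t \<in> E" by (auto simp: dist_real_def)
    with lip[OF E _ s(1) t] show "dist (\<phi> s) (\<phi> t) \<le> K * \<bar>s - t\<bar>" by blast
  qed (use d in auto)
qed

section \<open>Minimal-norm points of polyhedra\<close>

definition lin_ineq_set :: "('i \<Rightarrow> 'm::real_inner) \<Rightarrow> 'i set \<Rightarrow> ('i \<Rightarrow> real) \<Rightarrow> 'm set" where
  "lin_ineq_set a I b = {z. \<forall>i\<in>I. a i \<bullet> z \<le> b i}"

definition kkt_certificate ::
  "('i \<Rightarrow> 'm::real_inner) \<Rightarrow> 'i set \<Rightarrow> ('i \<Rightarrow> real) \<Rightarrow> 'i set \<Rightarrow> 'm \<Rightarrow> bool" where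
  "kkt_certificate a I b J z \<longleftrightarrow>
     J \<subseteq> I \<and> z \<in> lin_ineq_set a I b \<and> (\<forall>i\<in>J. a i \<bullet> z = b i) \<and> - z \<in> convex_cone hull (a ` J)"

lemma lin_ineq_set_eq_INT: "lin_ineq_set a I b = (\<Inter>i\<in>I. {z. a i \<bullet> z \<le> b i})"
  by (auto simp: lin_ineq_set_def)

lemma closed_lin_ineq_set: "closed (lin_ineq_set a I b)"
  unfolding lin_ineq_set_eq_INT by (intro closed_INT ballI closed_halfspace_le)

lemma convex_lin_ineq_set: "convex (lin_ineq_set a I b)"
  unfolding lin_ineq_set_eq_INT by (intro convex_INT ballI convex_halfspace_le)

lemma lin_ineq_set_convex_combination:
  assumes "z0 \<in> lin_ineq_set a I b0" "z1 \<in> lin_ineq_set a I b1" "t \<in> {0..1}"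
  shows "(1 - t) *\<^sub>R z0 + t *\<^sub>R z1 \<in> lin_ineq_set a I (\<lambda>i. (1 - t) * b0 i + t * b1 i)"
proof -
  have "(1 - t) * (a i \<bullet> z0) + t * (a i \<bullet> z1) \<le> (1 - t) * b0 i + t * b1 i" if "i \<in> I" for i
    using assms that by (intro add_mono mult_left_mono) (auto simp: lin_ineq_set_def)
  then show ?thesis by (simp add: lin_ineq_set_def inner_add_right)
qed

lemma kkt_certificate_imp_closest_point:
  assumes "kkt_certificate a I b J z"
  shows "z = closest_point (lin_ineq_set a I b) 0"
proof (rule closest_point_unique[OF convex_lin_ineq_set closed_lin_ineq_set])
  show "z \<in> lin_ineq_set a I b" using assms by (simp add: kkt_certificate_def)
  show "\<forall>y\<in>lin_ineq_set a I b. dist 0 z \<le> dist 0 y"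
  proof
    fix y assume y: "y \<in> lin_ineq_set a I b"
    have "a ` J \<subseteq> {c. (y - z) \<bullet> c \<le> 0}"
      using assms y
      by (auto simp: kkt_certificate_def lin_ineq_set_def inner_diff_left inner_diff_right inner_commute)
    then have "convex_cone hull (a ` J) \<subseteq> {c. (y - z) \<bullet> c \<le> 0}"
      by (intro hull_minimal) (simp_all add: convex_cone_halfspace_le)
    then have "0 \<le> z \<bullet> (y - z)" using assms by (auto simp: kkt_certificate_def inner_commute)
    moreover have "norm y ^ 2 = norm z ^ 2 + 2 * (z \<bullet> (y - z)) + norm (y - z) ^ 2"
      by (simp add: power2_norm_eq_inner algebra_simps inner_commute)
    ultimately have "norm z ^ 2 \<le> norm y ^ 2" by simp
    then show "dist 0 z \<le> dist 0 y" by (simp add: power_mono_iff)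
  qed
qed

lemma farkas_convex_cone_hull:
  fixes S :: "'m::euclidean_space set"
  assumes "finite S" "x \<notin> convex_cone hull S"
  shows "\<exists>c. c \<bullet> x < 0 \<and> (\<forall>s\<in>S. 0 \<le> c \<bullet> s)"
proof -
  obtain c \<beta> where c: "c \<bullet> x < \<beta>" "\<And>y. y \<in> convex_cone hull S \<Longrightarrow> c \<bullet> y > \<beta>"
    using separating_hyperplane_closed_point[OF convex_convex_cone_hull
        closed_convex_cone_hull[OF assms(1)] assms(2)] by auto
  have \<beta>: "\<beta> < 0" using c(2)[OF convex_cone_hull_contains_0] by simp
  have nonneg: "0 \<le> c \<bullet> s" if "s \<in> S" for s
  proof (rule ccontr)
    assume "\<not> 0 \<le> c \<bullet> s"
    \<comment> \<open>a suitable positive multiple of \<open>s\<close> would lie in the cone on the wrong side of the hyperplane\<close>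
    then have "c \<bullet> ((\<beta> / (c \<bullet> s)) *\<^sub>R s) = \<beta>" by simp
    moreover have "(\<beta> / (c \<bullet> s)) *\<^sub>R s \<in> convex_cone hull S"
      using \<beta> \<open>\<not> 0 \<le> c \<bullet> s\<close> that
      by (intro convex_cone_hull_mul hull_inc) (auto simp: divide_nonpos_neg)
    ultimately show False using c(2) by fastforce
  qed
  show ?thesis by (intro exI[of _ c] conjI ballI nonneg) (use c(1) \<beta> in linarith)
qed

lemma closest_point_kkt_certificate:
  fixes a :: "'i \<Rightarrow> 'm::euclidean_space" and I :: "'i set"
  assumes fin: "finite I" and ne: "lin_ineq_set a I b \<noteq> {}"
  defines "p \<equiv> closest_point (lin_ineq_set a I b) 0"
  shows "kkt_certificate a I b {i\<in>I. a i \<bullet> p = b i} p"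
proof -
  let ?F = "lin_ineq_set a I b" and ?J = "{i\<in>I. a i \<bullet> p = b i}"
  have pF: "p \<in> ?F" unfolding p_def by (rule closest_point_in_set[OF closed_lin_ineq_set ne])
  have "- p \<in> convex_cone hull (a ` ?J)"
  proof (rule ccontr)
    assume "- p \<notin> convex_cone hull (a ` ?J)"
    moreover have "finite (a ` ?J)" using fin by simp
    ultimately obtain c where c: "c \<bullet> - p < 0" "\<forall>s\<in>a ` ?J. 0 \<le> c \<bullet> s"
      using farkas_convex_cone_hull by blast
    define y where "y = - c"
    have y: "p \<bullet> y < 0" "\<And>i. i \<in> ?J \<Longrightarrow> a i \<bullet> y \<le> 0"
      using c by (auto simp: y_def inner_commute)
    \<comment> \<open>moving from \<open>p\<close> a little in direction \<open>y\<close> stays feasible and decreases the norm\<close>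
    have "eventually (\<lambda>e. a i \<bullet> (p + e *\<^sub>R y) \<le> b i) (at_right 0)" if "i \<in> I" for i
    proof (cases "i \<in> ?J")
      case True
      then show ?thesis
        using y(2) by (intro eventually_at_rightI[of 0 1]) (auto simp: inner_add_right mult_nonneg_nonpos)
    next
      case False
      have "((\<lambda>e. a i \<bullet> (p + e *\<^sub>R y)) \<longlongrightarrow> a i \<bullet> (p + 0 *\<^sub>R y)) (at_right 0)"
        by (intro tendsto_intros)
      moreover have "a i \<bullet> (p + 0 *\<^sub>R y) < b i" using False that pF by (force simp: lin_ineq_set_def)
      ultimately have "eventually (\<lambda>e. a i \<bullet> (p + e *\<^sub>R y) < b i) (at_right 0)"
        by (rule order_tendstoD(2))
      then show ?thesis by (rule eventually_mono) simp
    qed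
    then have "eventually (\<lambda>e. p + e *\<^sub>R y \<in> ?F) (at_right 0)"
      using fin by (simp add: lin_ineq_set_def eventually_ball_finite)
    moreover have "((\<lambda>e. 2 * (p \<bullet> y) + e * (y \<bullet> y)) \<longlongrightarrow> 2 * (p \<bullet> y) + 0 * (y \<bullet> y)) (at_right 0)"
      by (intro tendsto_intros)
    then have "eventually (\<lambda>e. 2 * (p \<bullet> y) + e * (y \<bullet> y) < 0) (at_right (0::real))"
      by (rule order_tendstoD(2)) (use y(1) in simp)
    moreover have "eventually (\<lambda>e. e > (0::real)) (at_right 0)"
      by (simp add: eventually_at_right_less)
    ultimately have "eventually (\<lambda>e. p + e *\<^sub>R y \<in> ?F \<and> 2 * (p \<bullet> y) + e * (y \<bullet> y) < 0 \<and> e > 0)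
        (at_right 0)"
      by (intro eventually_conj)
    then obtain e where e: "p + e *\<^sub>R y \<in> ?F" "2 * (p \<bullet> y) + e * (y \<bullet> y) < 0" "e > 0"
      by (auto dest: eventually_happens)
    have "norm p \<le> norm (p + e *\<^sub>R y)"
      using closest_point_le[OF closed_lin_ineq_set e(1), of 0] by (simp add: p_def)
    then have "norm p ^ 2 \<le> norm (p + e *\<^sub>R y) ^ 2" by (simp add: power_mono)
    also have "\<dots> = norm p ^ 2 + e * (2 * (p \<bullet> y) + e * (y \<bullet> y))"
      by (simp add: power2_norm_eq_inner algebra_simps inner_commute)
    finally show False using mult_pos_neg[OF e(3) e(2)] by simp
  qed
  with pF show ?thesis by (simp add: kkt_certificate_def)
qed

lemma kkt_certificate_dist_le:
  assumes z: "kkt_certificate a I b J z" and z': "kkt_certificate a I b' J z'"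
    and C: "\<And>w. w \<in> span (a ` J) \<Longrightarrow> norm w \<le> C * (\<Sum>i\<in>J. \<bar>a i \<bullet> w\<bar>)"
  shows "dist z z' \<le> C * (\<Sum>i\<in>J. \<bar>b i - b' i\<bar>)"
proof -
  have cone: "convex_cone hull (a ` J) \<subseteq> span (a ` J)"
    by (intro hull_minimal span_superset convex_cone_span)
  have "z \<in> span (a ` J)" "z' \<in> span (a ` J)"
    using z z' cone span_neg[of "- _"] by (auto simp: kkt_certificate_def)
  then have "z - z' \<in> span (a ` J)" by (rule span_diff)
  moreover have "a i \<bullet> (z - z') = b i - b' i" if "i \<in> J" for i
    using z z' that by (simp add: kkt_certificate_def inner_diff_right)
  ultimately show ?thesis using C[of "z - z'"] by (simp add: dist_norm)
qed

lemma norm_le_sum_abs_inner_on_span: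
  fixes a :: "'i \<Rightarrow> 'm::euclidean_space"
  assumes fin: "finite J"
  obtains C where "C \<ge> 0" "\<And>w. w \<in> span (a ` J) \<Longrightarrow> norm w \<le> C * (\<Sum>i\<in>J. \<bar>a i \<bullet> w\<bar>)"
proof -
  define f where "f w = (\<Sum>i\<in>J. (a i \<bullet> w) *\<^sub>R a i)" for w
  have "linear f"
    by (auto intro!: linearI simp: f_def inner_add_right scaleR_add_left sum.distrib scaleR_sum_right)
  then have bl: "bounded_linear f" by (simp add: linear_conv_bounded_linear)
  have inj: "\<forall>w\<in>span (a ` J). f w = 0 \<longrightarrow> w = 0"
  proof (intro ballI impI)
    fix w assume w: "w \<in> span (a ` J)" and "f w = 0"
    have "w \<bullet> f w = (\<Sum>i\<in>J. (a i \<bullet> w)^2)"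
      by (simp add: f_def inner_sum_right power2_eq_square inner_commute)
    then have "(\<Sum>i\<in>J. (a i \<bullet> w)^2) = 0" using \<open>f w = 0\<close> by simp
    then have "\<forall>i\<in>J. a i \<bullet> w = 0" using fin by (simp add: sum_nonneg_eq_0_iff)
    then have "orthogonal w w"
      by (intro orthogonal_to_span[OF w]) (auto simp: orthogonal_def inner_commute)
    then show "w = 0" by (simp add: orthogonal_def)
  qed
  obtain e where e: "e > 0" "\<And>w. w \<in> span (a ` J) \<Longrightarrow> e * norm w \<le> norm (f w)"
    using injective_imp_isometric[OF closed_span subspace_span bl inj] by blast
  define M where "M = (\<Sum>i\<in>J. norm (a i))"
  show ?thesis
  proof (rule that[of "M / e"])
    show "M / e \<ge> 0" using e by (simp add: M_def sum_nonneg)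
    fix w assume w: "w \<in> span (a ` J)"
    have "norm (f w) \<le> (\<Sum>i\<in>J. \<bar>a i \<bullet> w\<bar> * norm (a i))"
      unfolding f_def by (rule order_trans[OF norm_sum]) simp
    also have "\<dots> \<le> (\<Sum>i\<in>J. \<bar>a i \<bullet> w\<bar> * M)"
      unfolding M_def using fin by (intro sum_mono mult_left_mono member_le_sum) auto
    also have "\<dots> = M * (\<Sum>i\<in>J. \<bar>a i \<bullet> w\<bar>)" by (simp add: sum_distrib_left mult.commute)
    finally have "e * norm w \<le> M * (\<Sum>i\<in>J. \<bar>a i \<bullet> w\<bar>)" using e(2)[OF w] by linarith
    then show "norm w \<le> M / e * (\<Sum>i\<in>J. \<bar>a i \<bullet> w\<bar>)" using e(1) by (simp add: field_simps)
  qed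
qed

lemma uniform_norm_le_sum_abs_inner_on_span:
  fixes a :: "'i \<Rightarrow> 'm::euclidean_space" and I :: "'i set"
  assumes fin: "finite I"
  obtains C where "C \<ge> 0"
    "\<And>J w. J \<subseteq> I \<Longrightarrow> w \<in> span (a ` J) \<Longrightarrow> norm w \<le> C * (\<Sum>i\<in>J. \<bar>a i \<bullet> w\<bar>)"
proof -
  have "\<forall>J\<in>Pow I. \<exists>C\<ge>0. \<forall>w\<in>span (a ` J). norm w \<le> C * (\<Sum>i\<in>J. \<bar>a i \<bullet> w\<bar>)"
    using norm_le_sum_abs_inner_on_span fin by (metis PowD finite_subset)
  then obtain g where g: "\<And>J. J \<in> Pow I \<Longrightarrow>
      g J \<ge> 0 \<and> (\<forall>w\<in>span (a ` J). norm w \<le> g J * (\<Sum>i\<in>J. \<bar>a i \<bullet> w\<bar>))"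
    by metis
  show ?thesis
  proof (rule that[of "\<Sum>J\<in>Pow I. g J"])
    show "(\<Sum>J\<in>Pow I. g J) \<ge> 0" using g by (intro sum_nonneg) auto
    fix J w assume J: "J \<subseteq> I" and w: "w \<in> span (a ` J)"
    have "g J \<le> (\<Sum>J\<in>Pow I. g J)" using fin J g by (intro member_le_sum) auto
    then have "g J * (\<Sum>i\<in>J. \<bar>a i \<bullet> w\<bar>) \<le> (\<Sum>J\<in>Pow I. g J) * (\<Sum>i\<in>J. \<bar>a i \<bullet> w\<bar>)"
      by (intro mult_right_mono) (auto intro: sum_nonneg)
    then show "norm w \<le> (\<Sum>J\<in>Pow I. g J) * (\<Sum>i\<in>J. \<bar>a i \<bullet> w\<bar>)" using g[of J] J w by force
  qed
qed

lemma sum_abs_diff_affine_combination: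
  fixes s t :: real and b0 b1 :: "'i \<Rightarrow> real"
  shows "(\<Sum>i\<in>J. \<bar>((1 - s) * b0 i + s * b1 i) - ((1 - t) * b0 i + t * b1 i)\<bar>)
     = \<bar>s - t\<bar> * (\<Sum>i\<in>J. \<bar>b1 i - b0 i\<bar>)"
proof -
  have "((1 - s) * b0 i + s * b1 i) - ((1 - t) * b0 i + t * b1 i) = (s - t) * (b1 i - b0 i)" for i
    by (simp add: algebra_simps)
  then show ?thesis by (simp add: abs_mult sum_distrib_left)
qed

lemma closed_kkt_certificate_parameters:
  fixes a :: "'i \<Rightarrow> 'm::euclidean_space" and I :: "'i set" and b0 b1 :: "'i \<Rightarrow> real"
  assumes fin: "finite I" and J: "J \<subseteq> I"
  defines "bt \<equiv> \<lambda>t i. (1 - t) * b0 i + t * b1 i"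
  shows "closed {t\<in>{0..1}. kkt_certificate a I (bt t) J (closest_point (lin_ineq_set a I (bt t)) 0)}"
proof -
  \<comment> \<open>a certificate determines the minimiser, so the set is the projection of the compact set \<open>G\<close>\<close>
  define G where "G = {(t, z). t \<in> {0..1} \<and> kkt_certificate a I (bt t) J z}"
  have img: "{t\<in>{0..1}. kkt_certificate a I (bt t) J (closest_point (lin_ineq_set a I (bt t)) 0)} = fst ` G"
  proof (intro equalityI subsetI)
    fix t assume "t \<in> {t\<in>{0..1}. kkt_certificate a I (bt t) J (closest_point (lin_ineq_set a I (bt t)) 0)}"
    then show "t \<in> fst ` G"
      by (intro rev_image_eqI[of "(t, closest_point (lin_ineq_set a I (bt t)) 0)"]) (auto simp: G_def)
  next
    fix t assume "t \<in> fst ` G"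
    then obtain z where z: "t \<in> {0..1}" "kkt_certificate a I (bt t) J z" by (auto simp: G_def)
    moreover from z(2) have "z = closest_point (lin_ineq_set a I (bt t)) 0"
      by (rule kkt_certificate_imp_closest_point)
    ultimately show "t \<in> {t\<in>{0..1}. kkt_certificate a I (bt t) J (closest_point (lin_ineq_set a I (bt t)) 0)}"
      by simp
  qed
  have "compact G"
  proof (cases "G = {}")
    case False
    then obtain t0 z0 where t0z0: "(t0, z0) \<in> G" by auto
    obtain C where C: "C \<ge> 0" "\<And>w. w \<in> span (a ` J) \<Longrightarrow> norm w \<le> C * (\<Sum>i\<in>J. \<bar>a i \<bullet> w\<bar>)"
      using norm_le_sum_abs_inner_on_span[OF finite_subset[OF J fin], where a = a] by blast
    define R where "R = C * (\<Sum>i\<in>J. \<bar>b1 i - b0 i\<bar>)"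
    \<comment> \<open>all certificates are within \<open>R\<close> of each other, so \<open>G\<close> is bounded\<close>
    have "dist z z0 \<le> R" if "(t, z) \<in> G" for t z
    proof -
      have "dist z z0 \<le> C * (\<Sum>i\<in>J. \<bar>bt t i - bt t0 i\<bar>)"
        using that t0z0 kkt_certificate_dist_le[OF _ _ C(2)] by (auto simp: G_def)
      also have "\<dots> = C * (\<bar>t - t0\<bar> * (\<Sum>i\<in>J. \<bar>b1 i - b0 i\<bar>))"
        by (simp add: bt_def sum_abs_diff_affine_combination)
      also have "\<dots> \<le> R"
        using that t0z0 C(1) by (auto simp: G_def R_def intro!: mult_left_mono mult_left_le_one_le sum_nonneg)
      finally show ?thesis .
    qed
    then have sub: "G \<subseteq> {0..1} \<times> cball z0 R" by (auto simp: G_def dist_commute)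
    have G_eq: "G = (\<Inter>i\<in>I. {p. a i \<bullet> snd p \<le> bt (fst p) i}) \<inter> (\<Inter>i\<in>J. {p. a i \<bullet> snd p = bt (fst p) i})
        \<inter> {p. 0 \<le> fst p \<and> fst p \<le> 1} \<inter> (\<lambda>p. - snd p) -` (convex_cone hull (a ` J))"
      using J by (auto simp: G_def kkt_certificate_def lin_ineq_set_def)
    have "finite (a ` J)" using finite_subset[OF J fin] by simp
    then have "closed G"
      unfolding G_eq bt_def
      by (intro closed_Int closed_INT ballI closed_Collect_le closed_Collect_eq closed_Collect_conj
          continuous_closed_vimage closed_convex_cone_hull continuous_intros)
    then have "compact (({0..1} \<times> cball z0 R) \<inter> G)"
      by (intro compact_Int_closed compact_Times compact_Icc compact_cball)
    with sub show ?thesis by (simp add: Int_absorb1)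
  qed simp
  then have "compact (fst ` G)" by (intro compact_continuous_image continuous_intros)
  then show ?thesis unfolding img by (rule compact_imp_closed)
qed

theorem closest_point_lin_ineq_set_lipschitz:
  fixes a :: "'i \<Rightarrow> 'm::euclidean_space" and I :: "'i set"
  assumes fin: "finite I"
  obtains K where "K \<ge> 0" "\<And>b b'. lin_ineq_set a I b \<noteq> {} \<Longrightarrow> lin_ineq_set a I b' \<noteq> {} \<Longrightarrow>
    dist (closest_point (lin_ineq_set a I b) 0) (closest_point (lin_ineq_set a I b') 0)
      \<le> K * (\<Sum>i\<in>I. \<bar>b i - b' i\<bar>)"
proof (rule uniform_norm_le_sum_abs_inner_on_span[OF fin, where a = a])
  fix C assume C: "C \<ge> 0"
    "\<And>J w. J \<subseteq> I \<Longrightarrow> w \<in> span (a ` J) \<Longrightarrow> norm w \<le> C * (\<Sum>i\<in>J. \<bar>a i \<bullet> w\<bar>)"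
  show thesis
  proof (rule that[OF C(1)])
    fix b0 b1 assume ne0: "lin_ineq_set a I b0 \<noteq> {}" and ne1: "lin_ineq_set a I b1 \<noteq> {}"
    define bt where "bt t = (\<lambda>i. (1 - t) * b0 i + t * b1 i)" for t :: real
    define \<phi> where "\<phi> t = closest_point (lin_ineq_set a I (bt t)) 0" for t
    define D where "D = (\<Sum>i\<in>I. \<bar>b1 i - b0 i\<bar>)"
    define cert where "cert J = {t\<in>{0..1}. kkt_certificate a I (bt t) J (\<phi> t)}" for J
    have closed_cert: "closed F" if "F \<in> cert ` Pow I" for F
    proof -
      from that obtain J where "F = cert J" "J \<in> Pow I" by (rule imageE)
      then show ?thesis
        using closed_kkt_certificate_parameters[OF fin, of J a b0 b1]
        by (simp add: cert_def \<phi>_def bt_def)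
    qed
    have cover: "{0..1} \<subseteq> \<Union> (cert ` Pow I)"
    proof
      fix t :: real assume t: "t \<in> {0..1}"
      obtain z0 z1 where z0: "z0 \<in> lin_ineq_set a I b0" and z1: "z1 \<in> lin_ineq_set a I b1"
        using ne0 ne1 by blast
      then have "lin_ineq_set a I (bt t) \<noteq> {}"
        using lin_ineq_set_convex_combination[OF z0 z1 t] by (auto simp: bt_def)
      then have "t \<in> cert {i\<in>I. a i \<bullet> \<phi> t = bt t i}"
        using closest_point_kkt_certificate[OF fin] t by (simp add: cert_def \<phi>_def)
      then show "t \<in> \<Union> (cert ` Pow I)" by (rule UN_I[rotated]) auto
    qed
    have lip: "dist (\<phi> s) (\<phi> t) \<le> C * D * \<bar>s - t\<bar>"
      if "F \<in> cert ` Pow I" "s \<in> F" "t \<in> F" "s \<in> {0..1}" "t \<in> {0..1}" for F s t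
    proof -
      from that(1) obtain J where "F = cert J" "J \<in> Pow I" by (rule imageE)
      then have J: "J \<subseteq> I" "kkt_certificate a I (bt s) J (\<phi> s)" "kkt_certificate a I (bt t) J (\<phi> t)"
        using that(2,3) by (auto simp: cert_def)
      have "dist (\<phi> s) (\<phi> t) \<le> C * (\<bar>s - t\<bar> * (\<Sum>i\<in>J. \<bar>b1 i - b0 i\<bar>))"
        using kkt_certificate_dist_le[OF J(2,3) C(2)[OF J(1)]]
        by (simp add: bt_def sum_abs_diff_affine_combination)
      also have "\<dots> \<le> C * (\<bar>s - t\<bar> * D)"
        unfolding D_def using C(1) J(1) fin by (intro mult_left_mono sum_mono2) auto
      finally show ?thesis by (simp add: mult_ac)
    qed
    have "finite (cert ` Pow I)" using fin by simp
    then have "dist (\<phi> 0) (\<phi> 1) \<le> C * D"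
      using closed_cert cover lip by (rule dist_le_of_closed_cover_lipschitz)
    moreover have "bt 0 = b0" "bt 1 = b1" by (auto simp: bt_def)
    ultimately show "dist (closest_point (lin_ineq_set a I b0) 0) (closest_point (lin_ineq_set a I b1) 0)
        \<le> C * (\<Sum>i\<in>I. \<bar>b0 i - b1 i\<bar>)"
      by (simp add: \<phi>_def D_def abs_minus_commute)
  qed
qed

section \<open>Feasibility from convex hull distortion\<close>

lemma sqrt_add_le_tangent:
  fixes r c :: real
  assumes r: "r > 0" and nn: "r^2 + c \<ge> 0"
  shows "sqrt (r^2 + c) \<le> r + c / (2 * r)"
proof (rule real_le_lsqrt)
  have "c / (2 * r) \<ge> - r / 2" using nn r by (simp add: field_simps power2_eq_square)
  then show "0 \<le> r + c / (2 * r)" using r by simp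
  have "(r + c / (2 * r))^2 = r^2 + c + (c / (2 * r))^2"
    using r by (simp add: power2_eq_square field_simps)
  then show "r^2 + c \<le> (r + c / (2 * r))^2" by simp
qed

lemma smoothed_norm_first_order:
  fixes P :: "'d::real_inner \<Rightarrow> 'm::real_inner" and n :: 'd and \<eta> :: real
  defines "h \<equiv> \<lambda>y. n \<bullet> y - sqrt ((norm (P y))^2 + \<eta>^2)"
  assumes lin: "linear P" and \<eta>: "\<eta> > 0" and K: "convex K" "ys \<in> K" "t \<in> K"
    and max: "\<And>y. y \<in> K \<Longrightarrow> h y \<le> h ys"
  shows "n \<bullet> (t - ys) \<le> (P ys /\<^sub>R sqrt ((norm (P ys))^2 + \<eta>^2)) \<bullet> P (t - ys)"
proof -
  define q where "q = P ys"
  define r where "r = sqrt ((norm q)^2 + \<eta>^2)"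
  define d where "d = t - ys"
  define A where "A = (norm (P d))^2 / (2 * r)"
  have r2: "r^2 = (norm q)^2 + \<eta>^2" unfolding r_def by (simp add: add_nonneg_nonneg)
  have rpos: "r > 0" using \<eta> unfolding r_def by (simp add: add_nonneg_pos)
  \<comment> \<open>expand \<open>h (ys + l d) \<le> h ys\<close> to first order in \<open>l\<close>, with remainder \<open>l\<^sup>2 A\<close>\<close>
  have bound: "n \<bullet> d - (q /\<^sub>R r) \<bullet> P d \<le> l * A" if l: "0 < l" "l \<le> 1" for l
  proof -
    have "ys + l *\<^sub>R d = (1 - l) *\<^sub>R ys + l *\<^sub>R t" by (simp add: d_def algebra_simps)
    also have "\<dots> \<in> K" using l K by (intro convexD) auto
    finally have yK: "ys + l *\<^sub>R d \<in> K" .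
    define c where "c = 2 * l * (q \<bullet> P d) + l^2 * (norm (P d))^2"
    have "(norm (q + l *\<^sub>R P d))^2 = (q + l *\<^sub>R P d) \<bullet> (q + l *\<^sub>R P d)"
      by (rule power2_norm_eq_inner)
    also have "\<dots> = q \<bullet> q + 2 * l * (q \<bullet> P d) + l^2 * (P d \<bullet> P d)"
      by (simp add: inner_add_left inner_add_right inner_commute power2_eq_square algebra_simps)
    also have "\<dots> = (norm q)^2 + 2 * l * (q \<bullet> P d) + l^2 * (norm (P d))^2"
      by (simp add: power2_norm_eq_inner)
    finally have "(norm (q + l *\<^sub>R P d))^2 = (norm q)^2 + 2 * l * (q \<bullet> P d) + l^2 * (norm (P d))^2" .
    moreover have "P (ys + l *\<^sub>R d) = q + l *\<^sub>R P d" using lin by (simp add: q_def linear_add linear_scale)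
    ultimately have eqn: "(norm (P (ys + l *\<^sub>R d)))^2 + \<eta>^2 = r^2 + c"
      by (simp add: r2 c_def)
    then have "sqrt (r^2 + c) \<le> r + c / (2 * r)"
      by (intro sqrt_add_le_tangent rpos) (metis add_nonneg_nonneg zero_le_power2)
    moreover have "h (ys + l *\<^sub>R d) \<le> h ys" using max[OF yK] .
    then have "l * (n \<bullet> d) - sqrt (r^2 + c) \<le> - r"
      by (simp add: h_def eqn inner_add_right q_def[symmetric] r_def[symmetric])
    ultimately have "l * (n \<bullet> d) \<le> c / (2 * r)" by simp
    also have "c / (2 * r) = l * ((q /\<^sub>R r) \<bullet> P d) + l * (l * A)"
      using rpos by (simp add: c_def A_def field_simps power2_eq_square)
    finally have "l * (n \<bullet> d) \<le> l * ((q /\<^sub>R r) \<bullet> P d + l * A)" by (simp add: algebra_simps)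
    with l show ?thesis by simp
  qed
  have "((\<lambda>l. l * A) \<longlongrightarrow> 0 * A) (at_right 0)" by (intro tendsto_intros)
  moreover have "eventually (\<lambda>l. n \<bullet> d - (q /\<^sub>R r) \<bullet> P d \<le> l * A) (at_right 0)"
    using bound by (intro eventually_at_rightI[of 0 1]) auto
  ultimately have "n \<bullet> d - (q /\<^sub>R r) \<bullet> P d \<le> 0 * A" by (rule tendsto_lowerbound) simp
  then show ?thesis by (simp add: d_def q_def r_def)
qed

text \<open>
  The witness is \<open>z = \<Pi> y\<^sub>* / (\<parallel>\<Pi> y\<^sub>*\<parallel>\<^sup>2 + \<eta>\<^sup>2)\<^sup>1\<^sup>/\<^sup>2\<close>, where \<open>y\<^sub>*\<close> maximises the smoothed objective
  \<open>\<langle>n, y\<rangle> - (\<parallel>\<Pi> y\<parallel>\<^sup>2 + \<eta>\<^sup>2)\<^sup>1\<^sup>/\<^sup>2\<close> over \<open>conv T\<close>.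
\<close>
lemma dual_witness_of_distortion:
  fixes P :: "'d::euclidean_space \<Rightarrow> 'm::euclidean_space"
  assumes lin: "linear P" and fin: "finite T" and ne: "T \<noteq> {}" and n1: "norm n \<le> 1" and \<eta>: "\<eta> > 0"
    and dst: "\<And>y. y \<in> convex hull T \<Longrightarrow> norm y - norm (P y) < \<eta>"
  obtains z where "\<And>t. t \<in> T \<Longrightarrow> n \<bullet> t - z \<bullet> P t \<le> 2 * \<eta>"
proof -
  let ?K = "convex hull T"
  define h where "h y = n \<bullet> y - sqrt ((norm (P y))^2 + \<eta>^2)" for y
  have "continuous_on ?K h"
    unfolding h_def using lin by (intro continuous_intros linear_continuous_on linear_conv_bounded_linear[THEN iffD1])
  moreover have "compact ?K" using fin by (simp add: compact_convex_hull finite_imp_compact)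
  ultimately obtain ys where ys: "ys \<in> ?K" "\<And>y. y \<in> ?K \<Longrightarrow> h y \<le> h ys"
    using continuous_attains_sup[of ?K h] ne by auto
  define q where "q = P ys"
  define r where "r = sqrt ((norm q)^2 + \<eta>^2)"
  have r2: "r^2 = (norm q)^2 + \<eta>^2" unfolding r_def by (simp add: add_nonneg_nonneg)
  have rq: "norm q \<le> r" and r\<eta>: "\<eta> \<le> r" unfolding r_def by (auto intro: real_le_rsqrt)
  show ?thesis
  proof (rule that[of "q /\<^sub>R r"])
    fix t assume t: "t \<in> T"
    have first_order: "n \<bullet> (t - ys) \<le> (q /\<^sub>R r) \<bullet> P (t - ys)"
      unfolding q_def r_def using ys hull_inc[OF t] lin \<eta>
      by (intro smoothed_norm_first_order) (auto simp: h_def convex_convex_hull)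
    have "P t = q + P (t - ys)" using lin by (simp add: q_def linear_diff)
    then have "n \<bullet> t - (q /\<^sub>R r) \<bullet> P t
        = (n \<bullet> ys - (q /\<^sub>R r) \<bullet> q) + (n \<bullet> (t - ys) - (q /\<^sub>R r) \<bullet> P (t - ys))"
      by (simp add: inner_add_right inner_diff_right)
    also have "\<dots> \<le> n \<bullet> ys - (q /\<^sub>R r) \<bullet> q" using first_order by simp
    also have "(q /\<^sub>R r) \<bullet> q = (norm q)^2 / r" by (simp add: power2_norm_eq_inner divide_inverse_commute)
    also have "\<dots> = r - \<eta>^2 / r" using r2 r\<eta> \<eta> by (simp add: field_simps power2_eq_square)
    also have "n \<bullet> ys \<le> norm ys"
      using norm_cauchy_schwarz[of n ys] n1 mult_left_le_one_le[of "norm ys" "norm n"] by simp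
    also have "\<eta>^2 / r \<le> \<eta>" using r\<eta> \<eta> by (simp add: field_simps power2_eq_square mult_right_mono)
    then have "norm ys - (r - \<eta>^2 / r) \<le> norm ys - norm q + \<eta>" using rq by simp
    also have "\<dots> < 2 * \<eta>" using dst[OF ys(1)] by (simp add: q_def)
    finally show "n \<bullet> t - (q /\<^sub>R r) \<bullet> P t \<le> 2 * \<eta>" by simp
  qed
qed

lemma exists_feasible_point:
  fixes X :: "'d::euclidean_space set" and P :: "'d \<Rightarrow> 'm::euclidean_space"
  assumes fin: "finite X" and xk: "xk \<in> X" and lin: "linear P" and eps: "eps > 0"
    and chd: "conv_hull_distortion P (eps / 60) (diff_dirs X)"
  obtains z where "\<And>x. x \<in> X \<Longrightarrow>
    \<bar>z \<bullet> P (x - xk) - v \<bullet> (x - xk)\<bar> \<le> eps / 10 * norm v * norm (x - xk)"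
proof (cases "v = 0 \<or> X - {xk} = {}")
  case True
  then show ?thesis using lin by (intro that[of 0]) (auto simp: linear_0)
next
  case False
  define T where "T = (\<lambda>x. (x - xk) /\<^sub>R norm (x - xk)) ` (X - {xk}) \<union> (\<lambda>x. (xk - x) /\<^sub>R norm (xk - x)) ` (X - {xk})"
  have "T \<subseteq> diff_dirs X"
    unfolding T_def diff_dirs_def using xk by (intro subset_trans[OF _ closure_subset]) blast
  then have "convex hull T \<subseteq> convex hull (diff_dirs X)" by (rule hull_mono)
  then have dst: "norm y - norm (P y) < eps / 60" if "y \<in> convex hull T" for y
  proof -
    have "y \<in> convex hull (diff_dirs X)" using \<open>convex hull T \<subseteq> _\<close> that ..
    with chd have "\<bar>norm (P y) - norm y\<bar> < eps / 60" by (simp add: conv_hull_distortion_def)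
    then show ?thesis by linarith
  qed
  define n where "n = v /\<^sub>R norm v"
  have n1: "norm n \<le> 1" using False by (simp add: n_def)
  have T: "finite T" "T \<noteq> {}" using fin False by (auto simp: T_def)
  show ?thesis
  proof (rule dual_witness_of_distortion[OF lin T n1, where \<eta> = "eps / 60"])
    show "eps / 60 > 0" using eps by simp
    show "\<And>y. y \<in> convex hull T \<Longrightarrow> norm y - norm (P y) < eps / 60" by (fact dst)
    fix z0 assume z0: "\<And>t. t \<in> T \<Longrightarrow> n \<bullet> t - z0 \<bullet> P t \<le> 2 * (eps / 60)"
    show ?thesis
    proof (rule that[of "norm v *\<^sub>R z0"])
      fix x assume x: "x \<in> X"
      show "\<bar>(norm v *\<^sub>R z0) \<bullet> P (x - xk) - v \<bullet> (x - xk)\<bar> \<le> eps / 10 * norm v * norm (x - xk)"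
      proof (cases "x = xk")
        case True then show ?thesis using lin by (simp add: linear_0)
      next
        case False
        define s where "s = (x - xk) /\<^sub>R norm (x - xk)"
        have sT: "s \<in> T" unfolding T_def s_def using x False by (intro UnI1 image_eqI[of _ _ x]) auto
        have "- s = (xk - x) /\<^sub>R norm (xk - x)"
          by (simp add: s_def norm_minus_commute scaleR_diff_right)
        then have msT: "- s \<in> T" unfolding T_def using x False by (intro UnI2 image_eqI[of _ _ x]) auto
        \<comment> \<open>both \<open>s\<close> and \<open>-s\<close> lie in \<open>T\<close>, so the one-sided bound becomes two-sided\<close>
        have "n \<bullet> s - z0 \<bullet> P s \<le> eps / 30" "n \<bullet> (- s) - z0 \<bullet> P (- s) \<le> eps / 30"
          using z0[OF sT] z0[OF msT] by simp_all
        then have bound: "\<bar>z0 \<bullet> P s - n \<bullet> s\<bar> \<le> eps / 30"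
          unfolding abs_le_iff linear_neg[OF lin] inner_minus_left inner_minus_right by linarith
        have "P (x - xk) = norm (x - xk) *\<^sub>R P s"
          using lin False by (simp add: s_def linear_scale)
        moreover have "n \<bullet> s = (v \<bullet> (x - xk)) / (norm v * norm (x - xk))"
          by (simp add: n_def s_def divide_inverse mult_ac)
        then have "v \<bullet> (x - xk) = norm v * norm (x - xk) * (n \<bullet> s)"
          using False \<open>\<not> (v = 0 \<or> X - {xk} = {})\<close> by simp
        ultimately have "(norm v *\<^sub>R z0) \<bullet> P (x - xk) - v \<bullet> (x - xk)
            = (norm v * norm (x - xk)) * (z0 \<bullet> P s - n \<bullet> s)"
          by (simp add: algebra_simps)
        then have "\<bar>(norm v *\<^sub>R z0) \<bullet> P (x - xk) - v \<bullet> (x - xk)\<bar>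
            = (norm v * norm (x - xk)) * \<bar>z0 \<bullet> P s - n \<bullet> s\<bar>"
          by (simp add: abs_mult)
        also have "\<dots> \<le> (norm v * norm (x - xk)) * (eps / 30)"
          using bound by (intro mult_left_mono) auto
        also have "\<dots> \<le> eps / 10 * norm v * norm (x - xk)" using eps by simp
        finally show ?thesis .
      qed
    qed
  qed
qed

section \<open>Voronoi cells\<close>

lemma open_voronoi_cell:
  assumes "finite X"
  shows "open (voronoi_cell X x)"
proof -
  have "voronoi_cell X x = (\<Inter>y\<in>X - {x}. {u. dist u x < dist u y})"
    by (auto simp: voronoi_cell_def)
  with assms show ?thesis by (auto intro!: open_INT open_Collect_less continuous_intros)
qed

lemma NN_rule_eq_on_voronoi_cell:
  assumes "is_NN_rule X NN" "u \<in> voronoi_cell X x" "x \<in> X"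
  shows "NN u = x"
  using assms by (force simp: is_NN_rule_def voronoi_cell_def not_less)

lemma outside_voronoi_cells_subset_bisectors:
  fixes X :: "'a::euclidean_space set"
  assumes "finite X" "X \<noteq> {}"
  shows "UNIV - (\<Union>x\<in>X. voronoi_cell X x)
           \<subseteq> (\<Union>x\<in>X. \<Union>y\<in>X - {x}. {u. (2 *\<^sub>R (y - x)) \<bullet> u = y \<bullet> y - x \<bullet> x})"
proof
  fix u assume "u \<in> UNIV - (\<Union>x\<in>X. voronoi_cell X x)"
  moreover obtain x where x: "x \<in> X" "\<And>y. y \<in> X \<Longrightarrow> dist u x \<le> dist u y"
    using distance_attains_inf[OF finite_imp_closed[OF assms(1)] assms(2)] by metis
  ultimately obtain y where y: "y \<in> X" "y \<noteq> x" "dist u y \<le> dist u x"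
    by (auto simp: voronoi_cell_def not_less)
  then have "(u - x) \<bullet> (u - x) = (u - y) \<bullet> (u - y)"
    using x(2)[OF y(1)] by (simp add: dist_norm flip: power2_norm_eq_inner)
  then have "(2 *\<^sub>R (y - x)) \<bullet> u = y \<bullet> y - x \<bullet> x"
    by (simp add: inner_diff_left inner_diff_right inner_commute algebra_simps)
  with x(1) y(1,2) show "u \<in> (\<Union>x\<in>X. \<Union>y\<in>X - {x}. {u. (2 *\<^sub>R (y - x)) \<bullet> u = y \<bullet> y - x \<bullet> x})"
    by blast
qed

lemma null_sets_outside_voronoi_cells:
  fixes X :: "'a::euclidean_space set"
  assumes "finite X" "X \<noteq> {}"
  shows "UNIV - (\<Union>x\<in>X. voronoi_cell X x) \<in> null_sets lborel"
proof (rule null_sets_subset[OF _ _ outside_voronoi_cells_subset_bisectors[OF assms]])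
  have "{u. (2 *\<^sub>R (y - x)) \<bullet> u = y \<bullet> y - x \<bullet> x} \<in> null_sets lborel" if "y \<noteq> x" for x y :: 'a
  proof -
    have "negligible {u. (2 *\<^sub>R (y - x)) \<bullet> u = y \<bullet> y - x \<bullet> x}"
      using that by (intro negligible_hyperplane) simp
    then show ?thesis
      by (simp add: negligible_iff_null_sets null_sets_completion_iff borel_closed closed_hyperplane)
  qed
  with assms(1) show "(\<Union>x\<in>X. \<Union>y\<in>X - {x}. {u. (2 *\<^sub>R (y - x)) \<bullet> u = y \<bullet> y - x \<bullet> x}) \<in> null_sets lborel"
    by (intro null_sets.finite_UN) auto
  have "open (\<Union>x\<in>X. voronoi_cell X x)" using assms(1) by (intro open_UN ballI open_voronoi_cell)
  then have "closed (UNIV - (\<Union>x\<in>X. voronoi_cell X x))" by (simp add: closed_Diff)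
  then show "UNIV - (\<Union>x\<in>X. voronoi_cell X x) \<in> sets lborel" by (simp add: borel_closed)
qed

section \<open>The solution map on a Voronoi cell\<close>

text \<open>
  On the cell of \<open>x\<^sub>k\<close>, the constraints \<open>g\<^sub>i\<close> and \<open>g\<^sub>n\<^sub>+\<^sub>i\<close> are indexed by \<open>(x\<^sub>i, \<sigma>)\<close> with
  \<open>\<sigma> = 1\<close> and \<open>\<sigma> = -1\<close> respectively.
\<close>
lemma feas_set_eq_lin_ineq_set:
  assumes "is_NN_rule X NN" "u \<in> voronoi_cell X xk" "xk \<in> X"
  shows "feas_set P eps X NN u
    = lin_ineq_set (\<lambda>(x, \<sigma>). \<sigma> *\<^sub>R P (x - xk)) (X \<times> {-1, 1})
        (\<lambda>(x, \<sigma>). \<sigma> * ((u - xk) \<bullet> (x - xk)) + eps / 10 * norm (u - xk) * norm (x - xk))"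
  using NN_rule_eq_on_voronoi_cell[OF assms]
  by (auto simp: feas_set_def lin_ineq_set_def inner_commute algebra_simps)

lemma feas_set_nonempty:
  fixes X :: "'d::euclidean_space set" and P :: "'d \<Rightarrow> 'm::euclidean_space"
  assumes "finite X" "linear P" "eps > 0" "conv_hull_distortion P (eps / 60) (diff_dirs X)"
    and "is_NN_rule X NN"
  shows "feas_set P eps X NN u \<noteq> {}"
proof (rule exists_feasible_point[OF assms(1) _ assms(2,3,4), where xk = "NN u" and v = "u - NN u"])
  show "NN u \<in> X" using assms(5) by (simp add: is_NN_rule_def)
  fix z assume z: "\<And>x. x \<in> X \<Longrightarrow>
      \<bar>z \<bullet> P (x - NN u) - (u - NN u) \<bullet> (x - NN u)\<bar> \<le> eps / 10 * norm (u - NN u) * norm (x - NN u)"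
  have "z \<in> feas_set P eps X NN u"
    unfolding feas_set_def
  proof (intro CollectI ballI)
    fix x assume "x \<in> X"
    from z[OF this] show "z \<bullet> P (x - NN u) - (u - NN u) \<bullet> (x - NN u) - eps / 10 * norm (u - NN u) * norm (x - NN u) \<le> 0
      \<and> (u - NN u) \<bullet> (x - NN u) - z \<bullet> P (x - NN u) - eps / 10 * norm (u - NN u) * norm (x - NN u) \<le> 0"
      unfolding abs_le_iff by linarith
  qed
  then show ?thesis by blast
qed

lemma sol_map_locally_lipschitz_on_voronoi_cell:
  fixes X :: "'d::euclidean_space set" and P :: "'d \<Rightarrow> 'm::euclidean_space"
  assumes fin: "finite X" and lin: "linear P" and eps: "eps > 0"
    and chd: "conv_hull_distortion P (eps / 60) (diff_dirs X)" and nn: "is_NN_rule X NN"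
    and xk: "xk \<in> X" "u \<in> voronoi_cell X xk"
  shows "locally_lipschitz_at (sol_map P eps X NN) u"
proof -
  define I where "I = X \<times> {-1, 1::real}"
  define a where "a = (\<lambda>(x, \<sigma>). \<sigma> *\<^sub>R P (x - xk))"
  define b where "b v = (\<lambda>(x, \<sigma>). \<sigma> * ((v - xk) \<bullet> (x - xk)) + eps / 10 * norm (v - xk) * norm (x - xk))"
    for v :: 'd
  define L where "L = (\<Sum>i\<in>I. (1 + eps / 10) * norm (fst i - xk))"
  have F: "feas_set P eps X NN v = lin_ineq_set a I (b v)" if "v \<in> voronoi_cell X xk" for v
    unfolding a_def b_def I_def using feas_set_eq_lin_ineq_set[OF nn that xk(1)] .
  have ne: "lin_ineq_set a I (b v) \<noteq> {}" if "v \<in> voronoi_cell X xk" for v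
    using feas_set_nonempty[OF fin lin eps chd nn] F[OF that] by metis
  have b_lipschitz: "\<bar>b v i - b w i\<bar> \<le> (1 + eps / 10) * norm (fst i - xk) * dist v w"
    if i_mem: "i \<in> I" for v w i
  proof -
    obtain x \<sigma> where i: "i = (x, \<sigma>)" "\<bar>\<sigma>\<bar> = 1" using i_mem unfolding I_def by force
    have "b v i - b w i = \<sigma> * ((v - w) \<bullet> (x - xk)) + eps / 10 * norm (x - xk) * (norm (v - xk) - norm (w - xk))"
      by (simp add: b_def i(1) inner_diff_left field_simps)
    then have "\<bar>b v i - b w i\<bar> \<le> \<bar>(v - w) \<bullet> (x - xk)\<bar> + eps / 10 * norm (x - xk) * \<bar>norm (v - xk) - norm (w - xk)\<bar>"
      using eps i(2) by (simp add: abs_mult order_trans[OF abs_triangle_ineq])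
    also have "\<dots> \<le> norm (v - w) * norm (x - xk) + eps / 10 * norm (x - xk) * norm (v - w)"
      using eps Cauchy_Schwarz_ineq2[of "v - w" "x - xk"] norm_triangle_ineq3[of "v - xk" "w - xk"]
      by (intro add_mono mult_left_mono) auto
    finally show ?thesis by (simp add: i(1) dist_norm algebra_simps)
  qed
  have "finite I" using fin by (simp add: I_def)
  then show ?thesis
  proof (rule closest_point_lin_ineq_set_lipschitz[where a = a])
    fix K assume K: "K \<ge> 0" "\<And>b b'. lin_ineq_set a I b \<noteq> {} \<Longrightarrow> lin_ineq_set a I b' \<noteq> {} \<Longrightarrow>
      dist (closest_point (lin_ineq_set a I b) 0) (closest_point (lin_ineq_set a I b') 0)
        \<le> K * (\<Sum>i\<in>I. \<bar>b i - b' i\<bar>)"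
    show ?thesis unfolding locally_lipschitz_at_def
    proof (intro exI[of _ "voronoi_cell X xk"] exI[of _ "K * L + 1"] conjI ballI)
      show "open (voronoi_cell X xk)" using fin by (rule open_voronoi_cell)
      show "u \<in> voronoi_cell X xk" by (fact xk(2))
      show "0 < K * L + 1" using K(1) eps by (simp add: L_def add_nonneg_pos sum_nonneg)
      fix v w assume v: "v \<in> voronoi_cell X xk" and w: "w \<in> voronoi_cell X xk"
      have "dist (sol_map P eps X NN v) (sol_map P eps X NN w) \<le> K * (\<Sum>i\<in>I. \<bar>b v i - b w i\<bar>)"
        unfolding sol_map_def F[OF v] F[OF w] by (rule K(2)[OF ne[OF v] ne[OF w]])
      also have "\<dots> \<le> K * (L * dist v w)"
        unfolding L_def sum_distrib_right using K(1) b_lipschitz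
        by (intro mult_left_mono sum_mono) auto
      also have "\<dots> \<le> (K * L + 1) * dist v w" by (simp add: algebra_simps)
      finally show "dist (sol_map P eps X NN v) (sol_map P eps X NN w) \<le> (K * L + 1) * dist v w" .
    qed
  qed
qed

theorem corollary3p1:
  fixes X :: "'d::euclidean_space set"
    and P :: "'d \<Rightarrow> 'm::euclidean_space"
    and NN :: "'d \<Rightarrow> 'd"
    and eps :: real
  assumes "finite X" "X \<noteq> {}"
    and "0 < eps" "eps < 1"
    and "linear P"
    and "conv_hull_distortion P (eps / 60) (diff_dirs X)"
    and "is_NN_rule X NN"
  defines "V \<equiv> (\<Union>x\<in>X. voronoi_cell X x)"
  shows "(\<forall>u \<in> V - X. locally_lipschitz_at (sol_map P eps X NN) u)
         \<and> (UNIV - V) \<in> null_sets lborel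
         \<and> (AE u in lborel. locally_lipschitz_at (sol_map P eps X NN) u)"
proof -
  have lipschitz: "locally_lipschitz_at (sol_map P eps X NN) u" if "u \<in> V" for u
    using that sol_map_locally_lipschitz_on_voronoi_cell[OF assms(1,5,3,6,7)] by (auto simp: V_def)
  have null: "UNIV - V \<in> null_sets lborel"
    unfolding V_def using assms(1,2) by (rule null_sets_outside_voronoi_cells)
  have "AE u in lborel. locally_lipschitz_at (sol_map P eps X NN) u"
  proof (rule AE_I')
    show "UNIV - V \<in> null_sets lborel" by (fact null)
  qed (use lipschitz in auto)
  with lipschitz null show ?thesis by blast
qed

end
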